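(* Let $S,T$ be finite nonempty sets, $A,B\in\mathbb{R}^{S\times T}$, $\varepsilon>0$, and $f,g\in\mathbb{R}$ such that $E(f,g)\neq\emptyset$. If either ($f-\varepsilon\ge\alpha$ and $g-\varepsilon\ge\beta$) or ($f-\varepsilon<\alpha$ and $g-\varepsilon<\beta$), then $E\cap E(f,g)\neq\emptyset$.
   Context: $\operatorname{co}(A,B)$ is the convex hull in $\mathbb{R}^2$ of $\{(A(s,t),B(s,t)):s\in S,t\in T\}$. The punishment levels are $\alpha:=\min_{y\in\Delta(T)}\max_{x\in\Delta(S)}xAy$ and $\beta:=\min_{x\in\Delta(S)}\max_{y\in\Delta(T)}xBy$, where $xMy=\sum_{s,t}M(s,t)x(s)y(t)$. The set of uniform equilibrium payoffs is $E:=\{(\bar f,\bar g)\in\operatorname{co}(A,B):\bar f\ge\alpha,\ \bar g\ge\beta\}$, and the $\varepsilon$-acceptable payoff set is $E(f,g):=\operatorname{co}(A,B)\cap\{(\bar f,\bar g)\in\mathbb{R}^2:\bar f+\varepsilon\ge f,\ \bar g+\varepsilon\ge g\}$. *)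

theory Defs
  imports "HOL-Analysis.Analysis"
begin

definition mixed_strats :: "'a set \<Rightarrow> ('a \<Rightarrow> real) set" where
  "mixed_strats S = {x. (\<forall>s\<in>S. 0 \<le> x s) \<and> (\<forall>s. s \<notin> S \<longrightarrow> x s = 0) \<and> (\<Sum>s\<in>S. x s) = 1}"

definition bilin :: "'s set \<Rightarrow> 't set \<Rightarrow> ('s \<Rightarrow> real) \<Rightarrow> ('s \<Rightarrow> 't \<Rightarrow> real) \<Rightarrow> ('t \<Rightarrow> real) \<Rightarrow> real" where
  "bilin S T x M y = (\<Sum>s\<in>S. \<Sum>t\<in>T. M s t * x s * y t)"

definition coAB :: "'s set \<Rightarrow> 't set \<Rightarrow> ('s \<Rightarrow> 't \<Rightarrow> real) \<Rightarrow> ('s \<Rightarrow> 't \<Rightarrow> real) \<Rightarrow> (real \<times> real) set" where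
  "coAB S T A B = convex hull {(A s t, B s t) | s t. s \<in> S \<and> t \<in> T}"

text \<open>Punishment levels; min/max are attained (continuous functions on compact simplices),
  so they coincide with Inf/Sup.\<close>
definition alpha :: "'s set \<Rightarrow> 't set \<Rightarrow> ('s \<Rightarrow> 't \<Rightarrow> real) \<Rightarrow> real" where
  "alpha S T A = (INF y\<in>mixed_strats T. SUP x\<in>mixed_strats S. bilin S T x A y)"

definition beta :: "'s set \<Rightarrow> 't set \<Rightarrow> ('s \<Rightarrow> 't \<Rightarrow> real) \<Rightarrow> real" where
  "beta S T B = (INF x\<in>mixed_strats S. SUP y\<in>mixed_strats T. bilin S T x B y)"

definition Eq_payoffs :: "'s set \<Rightarrow> 't set \<Rightarrow> ('s \<Rightarrow> 't \<Rightarrow> real) \<Rightarrow> ('s \<Rightarrow> 't \<Rightarrow> real) \<Rightarrow> (real \<times> real) set" where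
  "Eq_payoffs S T A B = {p \<in> coAB S T A B. fst p \<ge> alpha S T A \<and> snd p \<ge> beta S T B}"

definition Eacc :: "'s set \<Rightarrow> 't set \<Rightarrow> ('s \<Rightarrow> 't \<Rightarrow> real) \<Rightarrow> ('s \<Rightarrow> 't \<Rightarrow> real) \<Rightarrow> real \<Rightarrow> real \<Rightarrow> real \<Rightarrow> (real \<times> real) set" where
  "Eacc S T A B \<epsilon> f g = coAB S T A B \<inter> {p. fst p + \<epsilon> \<ge> f \<and> snd p + \<epsilon> \<ge> g}"

end

theory Submission
  imports Defs
begin

text \<open>If \<open>f - \<epsilon> \<ge> \<alpha>\<close> and \<open>g - \<epsilon> \<ge> \<beta>\<close>, every point of \<open>E(f,g)\<close> already lies in \<open>E\<close>. Otherwise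
  both thresholds lie strictly below the punishment levels, so any point of \<open>co(A,B)\<close> dominating
  \<open>(\<alpha>, \<beta>)\<close> lies in \<open>E \<inter> E(f,g)\<close>. By von Neumann's minimax theorem player 1 has a mixed
  strategy \<open>x\<close> with \<open>xAy \<ge> \<alpha>\<close> for all \<open>y\<close>, and player 2 one \<open>y\<close> with \<open>xBy \<ge> \<beta>\<close> for all \<open>x\<close>;
  the payoff pair \<open>(xAy, xBy)\<close> of this profile is such a point. The minimax theorem is derived from
  Ville's theorem of the alternative, a special case of Gordan's theorem, which is proved by
  Fourier--Motzkin elimination.\<close>

section \<open>Mixed strategies and the bilinear payoff\<close>

lemma mixed_strats_nonneg: "x \<in> mixed_strats S \<Longrightarrow> s \<in> S \<Longrightarrow> 0 \<le> x s"
  unfolding mixed_strats_def by auto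

lemma mixed_strats_sum: "x \<in> mixed_strats S \<Longrightarrow> (\<Sum>s\<in>S. x s) = 1"
  unfolding mixed_strats_def by auto

lemma mixed_strats_nonempty:
  assumes "finite S" "S \<noteq> {}"
  shows "mixed_strats S \<noteq> {}"
proof -
  obtain s0 where "s0 \<in> S" using assms(2) by blast
  then have "(\<lambda>s. if s = s0 then 1 else 0) \<in> mixed_strats S"
    using assms(1) unfolding mixed_strats_def by auto
  then show ?thesis by blast
qed

lemma normalization_in_mixed_strats:
  assumes "finite S" "\<forall>s\<in>S. 0 \<le> w s" "0 < (\<Sum>s\<in>S. w s)"
  shows "\<exists>x\<in>mixed_strats S. \<forall>s\<in>S. x s = w s / (\<Sum>s\<in>S. w s)"
proof
  define x where "x s = (if s \<in> S then w s / (\<Sum>s\<in>S. w s) else 0)" for s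
  show "x \<in> mixed_strats S"
    unfolding mixed_strats_def x_def using assms by (auto simp: sum_divide_distrib[symmetric])
  show "\<forall>s\<in>S. x s = w s / (\<Sum>s\<in>S. w s)"
    unfolding x_def by simp
qed

lemma convex_comb_le_Max:
  fixes v :: "'a \<Rightarrow> real"
  assumes "finite S" "x \<in> mixed_strats S"
  shows "(\<Sum>s\<in>S. x s * v s) \<le> Max (v ` S)"
proof -
  have "(\<Sum>s\<in>S. x s * v s) \<le> (\<Sum>s\<in>S. x s * Max (v ` S))"
    using assms by (intro sum_mono mult_left_mono) (auto simp: mixed_strats_nonneg)
  also have "\<dots> = Max (v ` S)"
    using mixed_strats_sum[OF assms(2)] by (simp add: sum_distrib_right[symmetric])
  finally show ?thesis .
qed

lemma Min_le_convex_comb: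
  fixes v :: "'a \<Rightarrow> real"
  assumes "finite S" "x \<in> mixed_strats S"
  shows "Min (v ` S) \<le> (\<Sum>s\<in>S. x s * v s)"
proof -
  have "Min (v ` S) = (\<Sum>s\<in>S. x s * Min (v ` S))"
    using mixed_strats_sum[OF assms(2)] by (simp add: sum_distrib_right[symmetric])
  also have "\<dots> \<le> (\<Sum>s\<in>S. x s * v s)"
    using assms by (intro sum_mono mult_left_mono) (auto simp: mixed_strats_nonneg)
  finally show ?thesis .
qed

lemma bilin_eq_sum_rows: "bilin S T x M y = (\<Sum>s\<in>S. x s * (\<Sum>t\<in>T. M s t * y t))"
  unfolding bilin_def by (simp add: sum_distrib_left mult_ac)

lemma bilin_eq_sum_cols: "bilin S T x M y = (\<Sum>t\<in>T. y t * (\<Sum>s\<in>S. x s * M s t))"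
  unfolding bilin_def by (subst sum.swap) (simp add: sum_distrib_left mult_ac)

lemma bilin_transpose: "bilin T S y (\<lambda>t s. M s t) x = bilin S T x M y"
  unfolding bilin_def by (subst sum.swap) (simp add: mult_ac)

lemma bilin_le_Max_row:
  assumes "finite S" "x \<in> mixed_strats S"
  shows "bilin S T x M y \<le> Max ((\<lambda>s. \<Sum>t\<in>T. M s t * y t) ` S)"
  unfolding bilin_eq_sum_rows using assms by (rule convex_comb_le_Max)

lemma Min_col_le_bilin:
  assumes "finite T" "y \<in> mixed_strats T"
  shows "Min ((\<lambda>t. \<Sum>s\<in>S. x s * M s t) ` T) \<le> bilin S T x M y"
  unfolding bilin_eq_sum_cols using assms by (rule Min_le_convex_comb)

lemma bilin_pair_in_coAB:
  assumes "finite S" "finite T" "x \<in> mixed_strats S" "y \<in> mixed_strats T"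
  shows "(bilin S T x A y, bilin S T x B y) \<in> coAB S T A B"
proof -
  let ?w = "\<lambda>p. x (fst p) * y (snd p)" and ?v = "\<lambda>p. (A (fst p) (snd p), B (fst p) (snd p))"
  have "(\<Sum>p\<in>S \<times> T. ?w p *\<^sub>R ?v p) \<in> coAB S T A B"
    unfolding coAB_def
  proof (rule convex_sum)
    have "(\<Sum>p\<in>S \<times> T. ?w p) = (\<Sum>s\<in>S. x s) * (\<Sum>t\<in>T. y t)"
      by (simp add: sum.cartesian_product' sum_product)
    then show "(\<Sum>p\<in>S \<times> T. ?w p) = 1"
      using mixed_strats_sum[OF assms(3)] mixed_strats_sum[OF assms(4)] by simp
  qed (use assms in \<open>auto 0 3 intro!: hull_inc mult_nonneg_nonneg simp: mixed_strats_nonneg\<close>)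
  moreover have "(\<Sum>p\<in>S \<times> T. ?w p *\<^sub>R ?v p) = (bilin S T x A y, bilin S T x B y)"
    unfolding bilin_def by (simp add: prod_eq_iff fst_sum snd_sum sum.cartesian_product' mult_ac)
  ultimately show ?thesis by simp
qed

section \<open>Gordan's theorem of the alternative\<close>

definition semipositive_on :: "'a set \<Rightarrow> ('a \<Rightarrow> real) \<Rightarrow> bool" where
  "semipositive_on R x \<longleftrightarrow> (\<forall>r\<in>R. 0 \<le> x r) \<and> (\<exists>r\<in>R. 0 < x r)"

lemma semipositive_combination_trans:
  assumes "finite R" "finite Q"
    and cone: "\<forall>q\<in>Q. \<exists>c. semipositive_on R c \<and> q = (\<lambda>t. \<Sum>r\<in>R. c r * r t)"
    and x: "semipositive_on Q x"
  shows "\<exists>z. semipositive_on R z \<and> (\<forall>t. (\<Sum>r\<in>R. z r * r t) = (\<Sum>q\<in>Q. x q * q t))"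
proof -
  obtain C where C: "\<And>q. q \<in> Q \<Longrightarrow> semipositive_on R (C q) \<and> q = (\<lambda>t. \<Sum>r\<in>R. C q r * r t)"
    using cone by metis
  define z where "z r = (\<Sum>q\<in>Q. x q * C q r)" for r
  have z_nonneg: "0 \<le> z r" if "r \<in> R" for r
    unfolding z_def using that x C by (auto intro!: sum_nonneg simp: semipositive_on_def)
  have "\<exists>r\<in>R. 0 < z r"
  proof -
    obtain q where q: "q \<in> Q" "0 < x q" using x unfolding semipositive_on_def by blast
    then obtain r where r: "r \<in> R" "0 < C q r" using C unfolding semipositive_on_def by blast
    have "0 < x q * C q r" using q r by simp
    also have "\<dots> \<le> z r"
      unfolding z_def using assms(2) q r x C
      by (intro member_le_sum) (auto simp: semipositive_on_def)
    finally show ?thesis using r by blast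
  qed
  moreover have "(\<Sum>r\<in>R. z r * r t) = (\<Sum>q\<in>Q. x q * q t)" for t
  proof -
    have "(\<Sum>r\<in>R. z r * r t) = (\<Sum>q\<in>Q. x q * (\<Sum>r\<in>R. C q r * r t))"
      unfolding z_def sum_distrib_left sum_distrib_right mult.assoc by (rule sum.swap)
    also have "\<dots> = (\<Sum>q\<in>Q. x q * q t)"
      using C by (intro sum.cong refl) (metis (no_types))
    finally show ?thesis .
  qed
  ultimately show ?thesis using z_nonneg unfolding semipositive_on_def by blast
qed

lemma finite_sets_separated:
  fixes L U :: "real set"
  assumes "finite L" "finite U" "\<forall>a\<in>L. \<forall>b\<in>U. a < b"
  shows "\<exists>c. (\<forall>a\<in>L. a < c) \<and> (\<forall>b\<in>U. c < b)"
proof (cases "L = {}")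
  case True
  have "\<forall>b\<in>U. Min (insert 0 U) \<le> b" using assms(2) by (auto intro: Min_le)
  then have "\<forall>b\<in>U. Min (insert 0 U) - 1 < b" by force
  then show ?thesis using True by blast
next
  case False
  let ?l = "Max L" and ?u = "Min (insert (Max L + 1) U)"
  have "Max L \<in> L" using assms(1) False by (rule Max_in)
  then have "?l < ?u" using assms(2,3) by (auto simp del: Max_less_iff simp: Min_gr_iff)
  show ?thesis
  proof (intro exI[of _ "(?l + ?u) / 2"] conjI ballI)
    fix a assume "a \<in> L"
    then show "a < (?l + ?u) / 2" using Max_ge[OF assms(1)] \<open>?l < ?u\<close> by fastforce
  next
    fix b assume "b \<in> U"
    then have "?u \<le> b" using assms(2) by (intro Min_le) auto
    then show "(?l + ?u) / 2 < b" using \<open>?l < ?u\<close> by (simp add: field_simps)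
  qed
qed

definition fm_elim :: "'t \<Rightarrow> ('t \<Rightarrow> real) set \<Rightarrow> ('t \<Rightarrow> real) set" where
  "fm_elim t0 R = {r \<in> R. r t0 = 0} \<union>
     {(\<lambda>t. - n t0 * p t + p t0 * n t) | p n. p \<in> R \<and> 0 < p t0 \<and> n \<in> R \<and> n t0 < 0}"

lemma finite_fm_elim:
  assumes "finite R"
  shows "finite (fm_elim t0 R)"
proof -
  have "fm_elim t0 R \<subseteq> R \<union> (\<lambda>(p, n) t. - n t0 * p t + p t0 * n t) ` (R \<times> R)"
    unfolding fm_elim_def by auto
  then show ?thesis by (rule finite_subset) (use assms in simp)
qed

lemma fm_elim_vanishes: "r \<in> fm_elim t0 R \<Longrightarrow> r t0 = 0"
  unfolding fm_elim_def by auto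

lemma fm_elim_in_cone:
  assumes "finite R" "r \<in> fm_elim t0 R"
  shows "\<exists>c. semipositive_on R c \<and> r = (\<lambda>t. \<Sum>q\<in>R. c q * q t)"
proof -
  consider "r \<in> R"
    | p n where "r = (\<lambda>t. - n t0 * p t + p t0 * n t)" "p \<in> R" "0 < p t0" "n \<in> R" "n t0 < 0"
    using assms(2) unfolding fm_elim_def by blast
  then show ?thesis
  proof cases
    case 1
    then show ?thesis
      using assms(1) by (intro exI[of _ "\<lambda>q. of_bool (q = r)"]) (auto simp: semipositive_on_def)
  next
    case (2 p n)
    then have "p \<noteq> n" by auto
    let ?c = "\<lambda>q. (if q = p then - n t0 else 0) + (if q = n then p t0 else 0)"
    have "semipositive_on R ?c"
      using 2 \<open>p \<noteq> n\<close> unfolding semipositive_on_def by force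
    moreover have "(\<Sum>q\<in>R. ?c q * q t) = - n t0 * p t + p t0 * n t" for t
    proof -
      have "(\<Sum>q\<in>R. ?c q * q t) =
          (\<Sum>q\<in>R. if q = p then - n t0 * p t else 0) + (\<Sum>q\<in>R. if q = n then p t0 * n t else 0)"
        unfolding sum.distrib[symmetric] by (intro sum.cong) (auto simp: distrib_right)
      then show ?thesis using 2 assms(1) by simp
    qed
    ultimately show ?thesis using 2 by (intro exI[of _ ?c]) simp
  qed
qed

lemma fm_elim_bounds_compatible:
  assumes y: "\<forall>r\<in>fm_elim t0 R. (\<Sum>t\<in>T. r t * y t) < 0"
    and p: "p \<in> R" "0 < p t0" and n: "n \<in> R" "n t0 < 0"
  shows "(\<Sum>t\<in>T. n t * y t) / - n t0 < - (\<Sum>t\<in>T. p t * y t) / p t0"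
proof -
  have "(\<lambda>t. - n t0 * p t + p t0 * n t) \<in> fm_elim t0 R"
    unfolding fm_elim_def using p n by blast
  from bspec[OF y this] have "(\<Sum>t\<in>T. (- n t0 * p t + p t0 * n t) * y t) < 0"
    by simp
  moreover have "(\<Sum>t\<in>T. (- n t0 * p t + p t0 * n t) * y t) =
      - n t0 * (\<Sum>t\<in>T. p t * y t) + p t0 * (\<Sum>t\<in>T. n t * y t)"
    by (simp add: algebra_simps sum_subtractf sum_negf sum_distrib_left)
  ultimately show ?thesis using p(2) n(2) by (simp add: field_simps)
qed

text \<open>A row \<open>r\<close> with \<open>r t0 \<noteq> 0\<close> bounds the new coordinate \<open>c = y' t0\<close> from one side; the
  eliminated rows say precisely that all lower bounds lie below all upper bounds.\<close>

lemma fm_elim_strict_solution_extends: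
  assumes "finite R" "finite T" "t0 \<notin> T"
    and y: "\<forall>r\<in>fm_elim t0 R. (\<Sum>t\<in>T. r t * y t) < 0"
  shows "\<exists>y'. \<forall>r\<in>R. (\<Sum>t\<in>insert t0 T. r t * y' t) < 0"
proof -
  define v where "v r = (\<Sum>t\<in>T. r t * y t)" for r
  define P where "P = {p \<in> R. 0 < p t0}"
  define N where "N = {n \<in> R. n t0 < 0}"
  have "finite N" "finite P" using assms(1) unfolding N_def P_def by auto
  moreover have "\<forall>a\<in>(\<lambda>n. v n / - n t0) ` N. \<forall>b\<in>(\<lambda>p. - v p / p t0) ` P. a < b"
    using fm_elim_bounds_compatible[OF y] unfolding v_def N_def P_def by blast
  ultimately obtain c where
    c_lower: "\<And>n. n \<in> N \<Longrightarrow> v n / - n t0 < c" and c_upper: "\<And>p. p \<in> P \<Longrightarrow> c < - v p / p t0"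
    using finite_sets_separated[of "(\<lambda>n. v n / - n t0) ` N" "(\<lambda>p. - v p / p t0) ` P"] by auto
  have split: "(\<Sum>t\<in>insert t0 T. r t * (y(t0 := c)) t) = r t0 * c + v r" for r
    unfolding v_def using assms(2,3) by (auto intro!: sum.cong)
  have "(\<Sum>t\<in>insert t0 T. r t * (y(t0 := c)) t) < 0" if r: "r \<in> R" for r
  proof (cases "r t0" "0 :: real" rule: linorder_cases)
    case less
    then show ?thesis using c_lower[of r] r unfolding split N_def by (simp add: field_simps)
  next
    case equal
    then have "r \<in> fm_elim t0 R" using r unfolding fm_elim_def by blast
    then show ?thesis using y equal unfolding split v_def by simp
  next
    case greater
    then show ?thesis using c_upper[of r] r unfolding split P_def by (simp add: field_simps)
  qed
  then show ?thesis by blast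
qed

lemma gordan_alternative_set:
  assumes "finite T" "finite R"
  shows "(\<exists>y. \<forall>r\<in>R. (\<Sum>t\<in>T. r t * y t) < 0) \<or>
    (\<exists>x. semipositive_on R x \<and> (\<forall>t\<in>T. (\<Sum>r\<in>R. x r * r t) = 0))"
  using assms
proof (induction T arbitrary: R rule: finite_induct)
  case empty
  show ?case
  proof (cases "R = {}")
    case False
    then have "semipositive_on R (\<lambda>_. 1)" unfolding semipositive_on_def by auto
    then show ?thesis by auto
  qed simp
next
  case (insert t0 T)
  have "finite (fm_elim t0 R)" using insert.prems by (rule finite_fm_elim)
  from insert.IH[OF this] show ?case
  proof (elim disjE exE conjE)
    fix y assume "\<forall>r\<in>fm_elim t0 R. (\<Sum>t\<in>T. r t * y t) < 0"
    then show ?case using fm_elim_strict_solution_extends[OF insert.prems insert.hyps] by blast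
  next
    fix x assume x: "semipositive_on (fm_elim t0 R) x" "\<forall>t\<in>T. (\<Sum>r\<in>fm_elim t0 R. x r * r t) = 0"
    obtain z where z: "semipositive_on R z"
      and z_sum: "\<And>t. (\<Sum>r\<in>R. z r * r t) = (\<Sum>q\<in>fm_elim t0 R. x q * q t)"
      using semipositive_combination_trans[OF insert.prems \<open>finite (fm_elim t0 R)\<close> _ x(1)]
        fm_elim_in_cone[OF insert.prems] by blast
    have "\<forall>t\<in>insert t0 T. (\<Sum>r\<in>R. z r * r t) = 0"
      using x(2) unfolding z_sum by (auto simp: fm_elim_vanishes)
    then show ?case using z by blast
  qed
qed

lemma gordan_alternative:
  fixes row :: "'i \<Rightarrow> 't \<Rightarrow> real"
  assumes "finite I" "finite T"
  shows "(\<exists>y. \<forall>i\<in>I. (\<Sum>t\<in>T. row i t * y t) < 0) \<or>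
    (\<exists>x. semipositive_on I x \<and> (\<forall>t\<in>T. (\<Sum>i\<in>I. x i * row i t) = 0))"
  using gordan_alternative_set[OF assms(2) finite_imageI[OF assms(1), of row]]
proof (elim disjE exE conjE)
  fix y assume "\<forall>r\<in>row ` I. (\<Sum>t\<in>T. r t * y t) < 0"
  then show ?thesis by auto
next
  fix x assume x: "semipositive_on (row ` I) x" "\<forall>t\<in>T. (\<Sum>r\<in>row ` I. x r * r t) = 0"
  txt \<open>Each row vector gets its weight on a single index representing it.\<close>
  define rep where "rep = inv_into I row"
  have rep: "rep r \<in> I" "row (rep r) = r" if "r \<in> row ` I" for r
    using that unfolding rep_def by (auto intro: inv_into_into f_inv_into_f)
  define z where "z i = (if i \<in> rep ` row ` I then x (row i) else 0)" for i
  have "(\<Sum>i\<in>I. z i * row i t) = (\<Sum>r\<in>row ` I. x r * r t)" for t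
  proof -
    have "(\<Sum>i\<in>I. z i * row i t) = (\<Sum>i\<in>rep ` row ` I. x (row i) * row i t)"
      unfolding z_def using rep(1) assms(1) by (intro sum.mono_neutral_cong_right) auto
    also have "\<dots> = (\<Sum>r\<in>row ` I. x (row (rep r)) * row (rep r) t)"
      unfolding rep_def by (simp add: sum.reindex inj_on_inv_into)
    also have "\<dots> = (\<Sum>r\<in>row ` I. x r * r t)"
      using rep(2) by (intro sum.cong) auto
    finally show ?thesis .
  qed
  moreover have "semipositive_on I z"
  proof -
    have "\<forall>i\<in>I. 0 \<le> z i" using x(1) unfolding z_def semipositive_on_def by auto
    moreover obtain r where "r \<in> row ` I" "0 < x r" using x(1) unfolding semipositive_on_def by blast
    then have "rep r \<in> I" "0 < z (rep r)" using rep unfolding z_def by auto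
    ultimately show ?thesis unfolding semipositive_on_def by blast
  qed
  ultimately show ?thesis using x(2) by auto
qed

section \<open>The minimax theorem\<close>

definition stack_neg_id :: "('s \<Rightarrow> 't \<Rightarrow> real) \<Rightarrow> 's + 't \<Rightarrow> 't \<Rightarrow> real" where
  "stack_neg_id M = case_sum M (\<lambda>t0 t. if t = t0 then -1 else 0)"

lemma strict_solution_stack_neg_id:
  assumes "finite T" "T \<noteq> {}"
    and y: "\<forall>i\<in>S <+> T. (\<Sum>t\<in>T. stack_neg_id M i t * y t) < 0"
  shows "\<exists>y'\<in>mixed_strats T. \<forall>s\<in>S. (\<Sum>t\<in>T. M s t * y' t) < 0"
proof -
  have y_pos: "0 < y t" if "t \<in> T" for t
  proof -
    have "(\<Sum>t'\<in>T. stack_neg_id M (Inr t) t' * y t') = (\<Sum>t'\<in>T. if t' = t then - y t' else 0)"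
      by (intro sum.cong) (auto simp: stack_neg_id_def)
    then show ?thesis using bspec[OF y InrI[OF that]] assms(1) that by simp
  qed
  define Y where "Y = (\<Sum>t\<in>T. y t)"
  have "0 < Y" unfolding Y_def using assms(1,2) y_pos by (rule sum_pos)
  then obtain y' where y': "y' \<in> mixed_strats T" "\<forall>t\<in>T. y' t = y t / Y"
    using normalization_in_mixed_strats[OF assms(1)] y_pos less_imp_le unfolding Y_def by blast
  have "(\<Sum>t\<in>T. M s t * y' t) < 0" if "s \<in> S" for s
  proof -
    have "(\<Sum>t\<in>T. M s t * y' t) = (\<Sum>t\<in>T. M s t * y t) / Y"
      unfolding sum_divide_distrib using y'(2) by (intro sum.cong) auto
    moreover have "(\<Sum>t\<in>T. M s t * y t) < 0"
      using bspec[OF y InlI[OF that]] by (simp add: stack_neg_id_def)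
    ultimately show ?thesis using \<open>0 < Y\<close> by (simp add: divide_neg_pos)
  qed
  then show ?thesis using y'(1) by blast
qed

lemma null_combination_stack_neg_id:
  assumes "finite S" "finite T"
    and x: "semipositive_on (S <+> T) x" "\<forall>t\<in>T. (\<Sum>i\<in>S <+> T. x i * stack_neg_id M i t) = 0"
  shows "\<exists>x'\<in>mixed_strats S. \<forall>t\<in>T. 0 \<le> (\<Sum>s\<in>S. x' s * M s t)"
proof -
  have col: "(\<Sum>s\<in>S. x (Inl s) * M s t) = x (Inr t)" if "t \<in> T" for t
  proof -
    have "(\<Sum>t'\<in>T. x (Inr t') * stack_neg_id M (Inr t') t) = (\<Sum>t'\<in>T. if t' = t then - x (Inr t') else 0)"
      by (intro sum.cong) (auto simp: stack_neg_id_def)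
    then show ?thesis
      using bspec[OF x(2) that] assms that by (simp add: sum.Plus stack_neg_id_def)
  qed
  have x_nonneg: "\<forall>i\<in>S <+> T. 0 \<le> x i"
    using x(1) unfolding semipositive_on_def by blast
  have Inl_nonneg: "0 \<le> x (Inl s)" if "s \<in> S" for s
    using bspec[OF x_nonneg InlI[OF that]] .
  define X where "X = (\<Sum>s\<in>S. x (Inl s))"
  have X_eq_0_iff: "X = 0 \<longleftrightarrow> (\<forall>s\<in>S. x (Inl s) = 0)"
    unfolding X_def using assms(1) Inl_nonneg by (rule sum_nonneg_eq_0_iff)
  have "X \<noteq> 0"
  proof
    assume "X = 0"
    then have Inl_zero: "x (Inl s) = 0" if "s \<in> S" for s
      using X_eq_0_iff that by blast
    have "x (Inr t) = 0" if "t \<in> T" for t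
      using col[OF that] Inl_zero by simp
    with Inl_zero have "x i = 0" if "i \<in> S <+> T" for i
      using that by (cases i) auto
    then show False using x(1) unfolding semipositive_on_def by fastforce
  qed
  moreover have "0 \<le> X" unfolding X_def using Inl_nonneg by (rule sum_nonneg)
  ultimately have "0 < X" by simp
  then obtain x' where x': "x' \<in> mixed_strats S" "\<forall>s\<in>S. x' s = x (Inl s) / X"
    using normalization_in_mixed_strats[OF assms(1), of "\<lambda>s. x (Inl s)"] Inl_nonneg
    unfolding X_def by blast
  have "0 \<le> (\<Sum>s\<in>S. x' s * M s t)" if "t \<in> T" for t
  proof -
    have "(\<Sum>s\<in>S. x' s * M s t) = x (Inr t) / X"
      unfolding col[OF that, symmetric] sum_divide_distrib using x'(2) by (intro sum.cong) auto
    then show ?thesis using bspec[OF x_nonneg InrI[OF that]] \<open>0 < X\<close> by simp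
  qed
  then show ?thesis using x'(1) by blast
qed

lemma ville_alternative:
  fixes M :: "'s \<Rightarrow> 't \<Rightarrow> real"
  assumes "finite S" "finite T" "T \<noteq> {}"
  shows "(\<exists>y\<in>mixed_strats T. \<forall>s\<in>S. (\<Sum>t\<in>T. M s t * y t) < 0) \<or>
    (\<exists>x\<in>mixed_strats S. \<forall>t\<in>T. 0 \<le> (\<Sum>s\<in>S. x s * M s t))"
proof -
  have "finite (S <+> T)" using assms(1,2) by simp
  from gordan_alternative[OF this assms(2), of "stack_neg_id M"] show ?thesis
    using strict_solution_stack_neg_id[OF assms(2,3)] null_combination_stack_neg_id[OF assms(1,2)]
    by blast
qed

lemma SUP_bilin_le_Max_row:
  assumes "finite S" "S \<noteq> {}"
  shows "(SUP x\<in>mixed_strats S. bilin S T x M y) \<le> Max ((\<lambda>s. \<Sum>t\<in>T. M s t * y t) ` S)"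
  using mixed_strats_nonempty[OF assms] by (rule cSUP_least) (rule bilin_le_Max_row[OF assms(1)])

lemma alpha_le_SUP_bilin:
  assumes "finite S" "S \<noteq> {}" "finite T" "y \<in> mixed_strats T"
  shows "alpha S T M \<le> (SUP x\<in>mixed_strats S. bilin S T x M y)"
proof -
  obtain x0 where x0: "x0 \<in> mixed_strats S" using mixed_strats_nonempty[OF assms(1,2)] by blast
  have "bdd_below ((\<lambda>y. SUP x\<in>mixed_strats S. bilin S T x M y) ` mixed_strats T)"
  proof (rule bdd_belowI2)
    fix y' assume y': "y' \<in> mixed_strats T"
    have "Min ((\<lambda>t. \<Sum>s\<in>S. x0 s * M s t) ` T) \<le> bilin S T x0 M y'"
      using assms(3) y' by (rule Min_col_le_bilin)
    also have "\<dots> \<le> (SUP x\<in>mixed_strats S. bilin S T x M y')"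
      using x0 by (rule cSUP_upper) (rule bdd_aboveI2, rule bilin_le_Max_row[OF assms(1)])
    finally show "Min ((\<lambda>t. \<Sum>s\<in>S. x0 s * M s t) ` T) \<le> (SUP x\<in>mixed_strats S. bilin S T x M y')" .
  qed
  then show ?thesis unfolding alpha_def using assms(4) by (rule cINF_lower)
qed

lemma alpha_guaranteed:
  assumes "finite S" "S \<noteq> {}" "finite T" "T \<noteq> {}"
  shows "\<exists>x\<in>mixed_strats S. \<forall>y\<in>mixed_strats T. alpha S T M \<le> bilin S T x M y"
proof -
  let ?a = "alpha S T M"
  from ville_alternative[OF assms(1,3,4), of "\<lambda>s t. M s t - ?a"] show ?thesis
  proof (elim disjE bexE)
    fix y assume y: "y \<in> mixed_strats T" and below: "\<forall>s\<in>S. (\<Sum>t\<in>T. (M s t - ?a) * y t) < 0"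
    have "(\<Sum>t\<in>T. M s t * y t) < ?a" if "s \<in> S" for s
      using bspec[OF below that] mixed_strats_sum[OF y]
      by (simp add: left_diff_distrib sum_subtractf sum_distrib_left[symmetric])
    then have "Max ((\<lambda>s. \<Sum>t\<in>T. M s t * y t) ` S) < ?a" using assms(1,2) by simp
    moreover have "?a \<le> Max ((\<lambda>s. \<Sum>t\<in>T. M s t * y t) ` S)"
      using alpha_le_SUP_bilin[OF assms(1-3) y] SUP_bilin_le_Max_row[OF assms(1,2)] by (rule order_trans)
    ultimately show ?thesis by simp
  next
    fix x assume x: "x \<in> mixed_strats S" and above: "\<forall>t\<in>T. 0 \<le> (\<Sum>s\<in>S. x s * (M s t - ?a))"
    have "?a \<le> (\<Sum>s\<in>S. x s * M s t)" if "t \<in> T" for t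
      using bspec[OF above that] mixed_strats_sum[OF x]
      by (simp add: right_diff_distrib sum_subtractf sum_distrib_right[symmetric])
    then have "?a \<le> Min ((\<lambda>t. \<Sum>s\<in>S. x s * M s t) ` T)" using assms(3,4) by simp
    then have "?a \<le> bilin S T x M y" if "y \<in> mixed_strats T" for y
      using Min_col_le_bilin[OF assms(3) that] by (rule order_trans)
    then show ?thesis using x by blast
  qed
qed

lemma beta_guaranteed:
  assumes "finite S" "S \<noteq> {}" "finite T" "T \<noteq> {}"
  shows "\<exists>y\<in>mixed_strats T. \<forall>x\<in>mixed_strats S. beta S T B \<le> bilin S T x B y"
proof -
  have transpose: "bilin T S y (\<lambda>t s. B s t) x = bilin S T x B y" for x y
    by (rule bilin_transpose)
  have "beta S T B = alpha T S (\<lambda>t s. B s t)"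
    unfolding alpha_def beta_def transpose ..
  then show ?thesis
    using alpha_guaranteed[OF assms(3,4,1,2), of "\<lambda>t s. B s t"] by (simp only: transpose)
qed

theorem mainTheorem8:
  fixes S :: "'s set" and T :: "'t set"
    and A B :: "'s \<Rightarrow> 't \<Rightarrow> real" and \<epsilon> f g :: real
  assumes "finite S" "S \<noteq> {}" "finite T" "T \<noteq> {}"
    and "\<epsilon> > 0"
    and "Eacc S T A B \<epsilon> f g \<noteq> {}"
    and "(f - \<epsilon> \<ge> alpha S T A \<and> g - \<epsilon> \<ge> beta S T B)
         \<or> (f - \<epsilon> < alpha S T A \<and> g - \<epsilon> < beta S T B)"
  shows "Eq_payoffs S T A B \<inter> Eacc S T A B \<epsilon> f g \<noteq> {}"
  using assms(7)
proof
  assume "f - \<epsilon> \<ge> alpha S T A \<and> g - \<epsilon> \<ge> beta S T B"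
  then have "Eacc S T A B \<epsilon> f g \<subseteq> Eq_payoffs S T A B"
    unfolding Eacc_def Eq_payoffs_def by auto
  then show ?thesis using assms(6) by blast
next
  assume below: "f - \<epsilon> < alpha S T A \<and> g - \<epsilon> < beta S T B"
  obtain x where x: "x \<in> mixed_strats S" "\<forall>y\<in>mixed_strats T. alpha S T A \<le> bilin S T x A y"
    using alpha_guaranteed[OF assms(1-4)] by blast
  obtain y where y: "y \<in> mixed_strats T" "\<forall>x\<in>mixed_strats S. beta S T B \<le> bilin S T x B y"
    using beta_guaranteed[OF assms(1-4)] by blast
  let ?p = "(bilin S T x A y, bilin S T x B y)"
  have "?p \<in> coAB S T A B" using assms(1,3) x(1) y(1) by (rule bilin_pair_in_coAB)
  moreover have "alpha S T A \<le> fst ?p" "beta S T B \<le> snd ?p" using x y by auto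
  ultimately have "?p \<in> Eq_payoffs S T A B \<inter> Eacc S T A B \<epsilon> f g"
    using below unfolding Eq_payoffs_def Eacc_def by auto
  then show ?thesis by blast
qed

end
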